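(* Let $\mathcal{X}$ be a discrete set and let $\mathcal{A}$ be an $(\varepsilon,\delta)$-differentially private randomized algorithm that, given a dataset $S\in\mathcal{X}^n$, outputs a function from $\mathcal{X}$ to $[0,1]$. Let $\mathcal{P}$ be any distribution over $\mathcal{X}$, let $\mathbf{S}$ be distributed according to $\mathcal{P}^n$, and let $\boldsymbol{\phi}=\mathcal{A}(\mathbf{S})$. Then for any $\beta>0$, $\tau>0$ and $n\ge 48\ln(4/\beta)/\tau^2$, if $\varepsilon\le\tau/4$ and $\delta=\exp(-4\ln(8/\beta)/\tau)$, then $$\Pr\left[\,\left|\mathcal{P}[\boldsymbol{\phi}]-\mathcal{E}_{\mathbf{S}}[\boldsymbol{\phi}]\right|>\tau\,\right]\le\beta,$$ where the probability is over the randomness of $\mathcal{A}$ and of $\mathbf{S}$.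
   Context: For a function $\psi:\mathcal{X}\to[0,1]$, $\mathcal{P}[\psi]=\mathbb{E}_{x\sim\mathcal{P}}[\psi(x)]$, and for a dataset $S=(x_1,\dots,x_n)$, $\mathcal{E}_S[\psi]=\frac1n\sum_{i=1}^n\psi(x_i)$. Two datasets in $\mathcal{X}^n$ are adjacent if they differ in a single element. A randomized algorithm $\mathcal{A}$ with domain $\mathcal{X}^n$ is $(\varepsilon,\delta)$-differentially private if for every set $\mathcal{S}$ of outputs and every pair of adjacent datasets $x,y$, $\Pr[\mathcal{A}(x)\in\mathcal{S}]\le e^{\varepsilon}\Pr[\mathcal{A}(y)\in\mathcal{S}]+\delta$ (probability over the coins of $\mathcal{A}$). *)

theory Defs
  imports "HOL-Probability.Probability"
begin

definition output_space :: "('a \<Rightarrow> real) measure" where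
  "output_space = PiM UNIV (\<lambda>_. restrict_space borel {0..1::real})"

definition pop_mean :: "'a pmf \<Rightarrow> ('a \<Rightarrow> real) \<Rightarrow> real" where
  "pop_mean P \<psi> = measure_pmf.expectation P \<psi>"

definition emp_mean :: "'a list \<Rightarrow> ('a \<Rightarrow> real) \<Rightarrow> real" where
  "emp_mean S \<psi> = (\<Sum>x\<leftarrow>S. \<psi> x) / real (length S)"

definition adjacent :: "nat \<Rightarrow> 'a list \<Rightarrow> 'a list \<Rightarrow> bool" where
  "adjacent n x y \<longleftrightarrow> length x = n \<and> length y = n \<and> card {i. i < n \<and> x ! i \<noteq> y ! i} = 1"

definition rand_alg :: "nat \<Rightarrow> ('a list \<Rightarrow> ('a \<Rightarrow> real) measure) \<Rightarrow> bool" where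
  "rand_alg n A \<longleftrightarrow> (\<forall>S. length S = n \<longrightarrow> prob_space (A S) \<and> sets (A S) = sets output_space)"

definition diff_private :: "nat \<Rightarrow> real \<Rightarrow> real \<Rightarrow> ('a list \<Rightarrow> ('a \<Rightarrow> real) measure) \<Rightarrow> bool" where
  "diff_private n \<epsilon> \<delta> A \<longleftrightarrow>
     (\<forall>x y T. adjacent n x y \<longrightarrow> T \<in> sets output_space \<longrightarrow>
        measure (A x) T \<le> exp \<epsilon> * measure (A y) T + \<delta>)"

end

theory Submission
  imports Defs "HOL-Analysis.Harmonic_Numbers"
begin

(*
  Fix a sign sigma in {-1, 1} and put w(phi, x) = 1 + sigma * (phi x - P[phi]), a weight in [0, 2]
  with P-mean 1.  For t distinct indices i_1, ..., i_t, resampling these entries of S changes the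
  dataset in t places, so by group privacy the expectation of w(phi, S_i_1) * ... * w(phi, S_i_t)
  for phi = A(S) exceeds its value for fresh samples independent of phi, namely 1, by at most the
  factor exp (t * eps) and the additive term t * exp (t * eps) * delta * 2^t.  On the other hand,
  if sigma * (E_S[phi] - P[phi]) > tau then the weights of the sample sum to more than n * (1 + tau),
  and the average of these products over all tuples of distinct indices is at least
  (1 + tau - 2 * t / n)^t.  Markov's inequality bounds the probability of a deviation beyond tau in
  direction sigma by the ratio of the two quantities, which is at most beta / 2 for
  t = ceiling (5 * ln (2 / beta) / tau).
*)

lemma space_output_space: "space output_space = {f. \<forall>x. f x \<in> {0..1::real}}"
  unfolding output_space_def by (auto simp: space_PiM PiE_def extensional_def space_restrict_space)

lemma measurable_output_space_apply[measurable]: "(\<lambda>\<phi>. \<phi> x) \<in> borel_measurable output_space"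
proof -
  have "(\<lambda>\<phi>. \<phi> x) \<in> measurable output_space (restrict_space borel {0..1::real})"
    unfolding output_space_def by (rule measurable_component_singleton) simp
  moreover have "(\<lambda>y::real. y) \<in> borel_measurable (restrict_space borel {0..1::real})"
    by (rule measurable_restrict_space1) simp
  ultimately show ?thesis by (rule measurable_compose)
qed

lemma measurable_pop_mean[measurable]:
  "(\<lambda>\<phi>. pop_mean (P :: 'a::countable pmf) \<phi>) \<in> borel_measurable output_space"
proof -
  have "(\<lambda>(x, \<phi>::'a \<Rightarrow> real). \<phi> x) \<in> borel_measurable (count_space UNIV \<Otimes>\<^sub>M output_space)"
    by (rule measurable_pair_measure_countable1) simp_all
  then have "(\<lambda>(\<phi>::'a \<Rightarrow> real, x). \<phi> x) \<in> borel_measurable (output_space \<Otimes>\<^sub>M count_space UNIV)"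
    by (subst measurable_pair_swap_iff) simp
  then have "(\<lambda>(\<phi>::'a \<Rightarrow> real, x). \<phi> x) \<in> borel_measurable (output_space \<Otimes>\<^sub>M measure_pmf P)"
    by (subst measurable_cong_sets[OF sets_pair_measure_cong[OF refl sets_measure_pmf_count_space] refl])
  then show ?thesis
    unfolding pop_mean_def by (rule measure_pmf.borel_measurable_lebesgue_integral)
qed

lemma measurable_emp_mean[measurable]: "(\<lambda>\<phi>. emp_mean S \<phi>) \<in> borel_measurable output_space"
proof -
  have "(\<lambda>\<phi>. \<Sum>x\<leftarrow>S. \<phi> x) \<in> borel_measurable output_space"
    by (induction S) simp_all
  then show ?thesis unfolding emp_mean_def by simp
qed

lemma pop_mean_bounds:
  assumes "\<phi> \<in> space output_space"
  shows "0 \<le> pop_mean P \<phi> \<and> pop_mean P \<phi> \<le> 1"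
proof -
  have "0 \<le> \<phi> x \<and> \<phi> x \<le> 1" for x using assms by (auto simp: space_output_space)
  then show ?thesis
    unfolding pop_mean_def
    by (auto intro!: Bochner_Integration.integral_nonneg measure_pmf.integral_le_const
        measure_pmf.integrable_const_bound[where B=1])
qed

lemma emp_mean_bounds:
  assumes "\<phi> \<in> space output_space"
  shows "0 \<le> emp_mean S \<phi> \<and> emp_mean S \<phi> \<le> 1"
proof -
  have b: "0 \<le> \<phi> x \<and> \<phi> x \<le> 1" for x using assms by (auto simp: space_output_space)
  have "0 \<le> (\<Sum>x\<leftarrow>S. \<phi> x)" by (rule sum_list_nonneg) (use b in auto)
  moreover have "(\<Sum>x\<leftarrow>S. \<phi> x) \<le> (\<Sum>x\<leftarrow>S. 1)" by (rule sum_list_mono) (use b in auto)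
  ultimately show ?thesis unfolding emp_mean_def
    by (cases "S = []") (auto simp: sum_list_triv field_simps)
qed

lemma deviation_event_empty:
  assumes "1 \<le> \<tau>"
  shows "{\<phi> \<in> space output_space. \<tau> < \<bar>pop_mean P \<phi> - emp_mean S \<phi>\<bar>} = {}"
  using pop_mean_bounds[of _ P] emp_mean_bounds[of _ S] assms by fastforce

lemma rand_algD:
  assumes "rand_alg n A" and "length S = n"
  shows "prob_space (A S)" and "sets (A S) = sets output_space"
    and "space (A S) = space output_space"
proof -
  show "prob_space (A S)" and sets: "sets (A S) = sets output_space"
    using assms by (auto simp: rand_alg_def)
  from sets show "space (A S) = space output_space" by (rule sets_eq_imp_space_eq)
qed

lemma (in prob_space) integral_bounds:
  fixes h :: "'a \<Rightarrow> real"
  assumes "h \<in> borel_measurable M" and "\<And>x. x \<in> space M \<Longrightarrow> a \<le> h x \<and> h x \<le> b"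
  shows "a \<le> (\<integral>x. h x \<partial>M) \<and> (\<integral>x. h x \<partial>M) \<le> b"
proof -
  have "integrable M h"
    using assms
    by (intro integrable_const_bound[where B="max \<bar>a\<bar> \<bar>b\<bar>"] AE_I2) (fastforce simp: abs_le_iff)
  then show ?thesis
    using integral_mono[of M "\<lambda>_. a" h] integral_mono[of M h "\<lambda>_. b"] assms
    by (auto simp: prob_space)
qed

lemma (in prob_space) prob_le_expectation_div:
  fixes u :: "'a \<Rightarrow> real"
  assumes E: "E \<in> events" and u: "integrable M u" and "0 < c"
    and nonneg: "\<And>x. x \<in> space M \<Longrightarrow> 0 \<le> u x" and above: "\<And>x. x \<in> E \<Longrightarrow> c \<le> u x"
  shows "prob E \<le> expectation u / c"
proof -
  have "c * prob E = (\<integral>x. c * indicator E x \<partial>M)"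
    using E by (simp add: emeasure_eq_measure)
  also have "\<dots> \<le> expectation u"
  proof (rule integral_mono[OF _ u])
    show "integrable M (\<lambda>x. c * indicator E x)"
      using E by (intro integrable_mult_right integrable_real_indicator) (auto simp: emeasure_eq_measure)
    show "c * indicator E x \<le> u x" if "x \<in> space M" for x
      using that nonneg above \<open>0 < c\<close> by (auto simp: indicator_def)
  qed
  finally show ?thesis using \<open>0 < c\<close> by (simp add: field_simps)
qed

lemma nn_integral_layer_cake:
  fixes h :: "'a \<Rightarrow> real"
  assumes "sigma_finite_measure M" and h: "h \<in> borel_measurable M"
    and nonneg: "\<And>x. x \<in> space M \<Longrightarrow> 0 \<le> h x"
  shows "(\<integral>\<^sup>+x. ennreal (h x) \<partial>M) = (\<integral>\<^sup>+s\<in>{0..}. emeasure M {x\<in>space M. s < h x} \<partial>lborel)"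
proof -
  interpret pair_sigma_finite M lborel
    using assms(1) lborel.sigma_finite_measure_axioms by (rule pair_sigma_finite.intro)
  have level_set: "{x\<in>space M. s < h x} \<in> sets M" for s
    using h by measurable
  have "(\<integral>\<^sup>+x. ennreal (h x) \<partial>M)
      = (\<integral>\<^sup>+x. (\<integral>\<^sup>+s. indicator {x\<in>space M. s < h x} x * indicator {0..} s \<partial>lborel) \<partial>M)"
  proof (rule nn_integral_cong)
    fix x assume x: "x \<in> space M"
    have "(\<integral>\<^sup>+s. indicator {x\<in>space M. s < h x} x * indicator {0..} s \<partial>lborel)
        = (\<integral>\<^sup>+s. indicator {0..<h x} s \<partial>lborel)"
      using x by (intro nn_integral_cong) (auto simp: indicator_def)
    then show "ennreal (h x) = (\<integral>\<^sup>+s. indicator {x\<in>space M. s < h x} x * indicator {0..} s \<partial>lborel)"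
      using nonneg[OF x] by simp
  qed
  also have "\<dots> = (\<integral>\<^sup>+s. (\<integral>\<^sup>+x. indicator {x\<in>space M. s < h x} x * indicator {0..} s \<partial>M) \<partial>lborel)"
    by (rule Fubini'[symmetric]) (use h in measurable)
  also have "\<dots> = (\<integral>\<^sup>+s\<in>{0..}. emeasure M {x\<in>space M. s < h x} \<partial>lborel)"
    using level_set by (simp add: nn_integral_multc)
  finally show ?thesis .
qed

lemma borel_measurable_emeasure_level_sets:
  fixes h :: "'a \<Rightarrow> real"
  assumes "sigma_finite_measure M" and h: "h \<in> borel_measurable M"
  shows "(\<lambda>s. emeasure M {x\<in>space M. s < h x}) \<in> borel_measurable borel"
proof -
  interpret sigma_finite_measure M by fact
  have "(\<lambda>s. \<integral>\<^sup>+x. indicator {x\<in>space M. s < h x} x \<partial>M) \<in> borel_measurable borel"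
    using h by measurable
  moreover have "{x\<in>space M. s < h x} \<in> sets M" for s using h by measurable
  ultimately show ?thesis by simp
qed

lemma (in finite_measure) integral_layer_cake:
  fixes h :: "'a \<Rightarrow> real"
  assumes h: "h \<in> borel_measurable M" and bounds: "\<And>x. x \<in> space M \<Longrightarrow> 0 \<le> h x \<and> h x \<le> B"
  shows "ennreal (\<integral>x. h x \<partial>M) = (\<integral>\<^sup>+s\<in>{0..}. emeasure M {x\<in>space M. s < h x} \<partial>lborel)"
proof -
  have "ennreal (\<integral>x. h x \<partial>M) = (\<integral>\<^sup>+x. ennreal (h x) \<partial>M)"
    using assms
    by (intro nn_integral_eq_integral[symmetric] integrable_const_bound[where B=B] AE_I2) auto
  also have "\<dots> = (\<integral>\<^sup>+s\<in>{0..}. emeasure M {x\<in>space M. s < h x} \<partial>lborel)"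
    using assms by (intro nn_integral_layer_cake sigma_finite_measure_axioms) auto
  finally show ?thesis .
qed

lemma integral_le_of_measure_le:
  fixes h :: "'a \<Rightarrow> real"
  assumes M: "prob_space M" and N: "prob_space N" and sets_eq: "sets M = sets N"
    and le: "\<And>T. T \<in> sets N \<Longrightarrow> measure M T \<le> c * measure N T + d"
    and h: "h \<in> borel_measurable N" and bounds: "\<And>x. x \<in> space N \<Longrightarrow> 0 \<le> h x \<and> h x \<le> B"
    and c: "0 \<le> c" and d: "0 \<le> d"
  shows "(\<integral>x. h x \<partial>M) \<le> c * (\<integral>x. h x \<partial>N) + d * B"
proof -
  interpret M: prob_space M by fact
  interpret N: prob_space N by fact
  have space_eq: "space M = space N" using sets_eq by (rule sets_eq_imp_space_eq)
  have hM: "h \<in> borel_measurable M" using h by (simp add: measurable_cong_sets[OF sets_eq refl])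
  have B: "0 \<le> B" using bounds N.not_empty by fastforce
  have level_le: "emeasure M {x\<in>space M. s < h x} * indicator {0..} s
      \<le> c * (emeasure N {x\<in>space N. s < h x} * indicator {0..} s) + d * indicator {0..<B} s"
    for s :: real
  proof (cases "0 \<le> s \<and> s < B")
    case True
    have "{x\<in>space N. s < h x} \<in> sets N" using h by measurable
    then have "ennreal (measure M {x\<in>space N. s < h x})
        \<le> ennreal (c * measure N {x\<in>space N. s < h x} + d)"
      by (intro ennreal_leI le)
    then show ?thesis
      using True c d
      by (simp add: space_eq M.emeasure_eq_measure N.emeasure_eq_measure ennreal_plus ennreal_mult)
  next
    case False
    then have "s < 0 \<or> {x\<in>space M. s < h x} = {}" using bounds space_eq by fastforce
    then show ?thesis
    proof
      assume empty: "{x\<in>space M. s < h x} = {}"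
      show ?thesis unfolding empty by simp
    qed simp
  qed
  have "ennreal (\<integral>x. h x \<partial>M) = (\<integral>\<^sup>+s\<in>{0..}. emeasure M {x\<in>space M. s < h x} \<partial>lborel)"
    using bounds by (intro M.integral_layer_cake[where B=B] hM) (simp add: space_eq)
  also have "\<dots> \<le> (\<integral>\<^sup>+s. c * (emeasure N {x\<in>space N. s < h x} * indicator {0..} s)
      + d * indicator {0..<B} s \<partial>lborel)"
    by (intro nn_integral_mono level_le)
  also have "\<dots> = c * (\<integral>\<^sup>+s\<in>{0..}. emeasure N {x\<in>space N. s < h x} \<partial>lborel) + d * B"
    using borel_measurable_emeasure_level_sets[OF N.sigma_finite_measure_axioms h] B d
    by (simp add: nn_integral_add nn_integral_cmult ennreal_indicator ennreal_mult)
  also have "\<dots> = ennreal (c * (\<integral>x. h x \<partial>N) + d * B)"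
    using c d B bounds
    by (simp add: N.integral_layer_cake[OF h bounds] ennreal_mult ennreal_plus
        Bochner_Integration.integral_nonneg)
  finally have "ennreal (\<integral>x. h x \<partial>M) \<le> ennreal (c * (\<integral>x. h x \<partial>N) + d * B)" .
  moreover have "0 \<le> c * (\<integral>x. h x \<partial>N) + d * B"
    using c d B bounds by (simp add: Bochner_Integration.integral_nonneg)
  ultimately show ?thesis by (simp add: ennreal_le_iff)
qed

lemma integrable_measure_pmf_bounded:
  fixes f :: "'a \<Rightarrow> real"
  assumes "\<And>x. x \<in> set_pmf p \<Longrightarrow> \<bar>f x\<bar> \<le> B"
  shows "integrable (measure_pmf p) f"
  by (rule measure_pmf.integrable_const_bound[where B=B]) (auto simp: AE_measure_pmf_iff assms)

lemma integral_mono_measure_pmf: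
  fixes f g :: "'a \<Rightarrow> real"
  assumes "\<And>x. x \<in> set_pmf p \<Longrightarrow> f x \<le> g x"
    and "\<And>x. x \<in> set_pmf p \<Longrightarrow> \<bar>f x\<bar> \<le> B" and "\<And>x. x \<in> set_pmf p \<Longrightarrow> \<bar>g x\<bar> \<le> B'"
  shows "measure_pmf.expectation p f \<le> measure_pmf.expectation p g"
  by (rule integral_mono_AE) (auto intro: integrable_measure_pmf_bounded assms simp: AE_measure_pmf_iff)

lemma expectation_measure_le_1:
  assumes "rand_alg n A"
  shows "measure_pmf.expectation (replicate_pmf n P) (\<lambda>S. measure (A S) (T S)) \<le> 1"
proof -
  have "measure (A S) (T S) \<le> 1" if "S \<in> set_pmf (replicate_pmf n P)" for S
    using that prob_space.prob_le_1[OF rand_algD(1)[OF assms]] by (simp add: set_replicate_pmf)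
  then have "measure_pmf.expectation (replicate_pmf n P) (\<lambda>S. measure (A S) (T S))
      \<le> measure_pmf.expectation (replicate_pmf n P) (\<lambda>S. 1)"
    by (intro integral_mono_measure_pmf[where B=1 and B'=1]) auto
  then show ?thesis by simp
qed

lemma integral_bind_pmf:
  fixes f :: "'b \<Rightarrow> real"
  assumes bounded: "\<And>y. y \<in> set_pmf (bind_pmf p q) \<Longrightarrow> \<bar>f y\<bar> \<le> B"
  shows "measure_pmf.expectation (bind_pmf p q) f
    = measure_pmf.expectation p (\<lambda>x. measure_pmf.expectation (q x) f)"
proof -
  \<comment> \<open>\<open>integral_bind\<close> needs a bound everywhere, not only on the support: clip \<open>f\<close>.\<close>
  define f' where "f' y = max (- \<bar>B\<bar>) (min \<bar>B\<bar> (f y))" for y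
  have f'_eq: "f' y = f y" if "y \<in> set_pmf (bind_pmf p q)" for y
    using bounded[OF that] unfolding f'_def by auto
  have "measure_pmf.expectation (bind_pmf p q) f = measure_pmf.expectation (bind_pmf p q) f'"
    by (rule integral_cong_AE) (auto simp: AE_measure_pmf_iff f'_eq)
  also have "\<dots> = measure_pmf.expectation p (\<lambda>x. measure_pmf.expectation (q x) f')"
    unfolding measure_pmf_bind
    by (rule integral_bind[where K="count_space UNIV" and B="\<bar>B\<bar>" and B'=1])
       (auto simp: f'_def measure_pmf.emeasure_space_1 intro!: measure_pmf.finite_measure
         measure_pmf_in_subprob_algebra)
  also have "\<dots> = measure_pmf.expectation p (\<lambda>x. measure_pmf.expectation (q x) f)"
    by (intro integral_cong_AE AE_pmfI) (auto intro!: integral_cong_AE AE_pmfI f'_eq)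
  finally show ?thesis .
qed

lemma expectation_replicate_pmf_prod_list:
  fixes g :: "'a \<Rightarrow> real"
  assumes bounded: "\<And>x. x \<in> set_pmf P \<Longrightarrow> \<bar>g x\<bar> \<le> B"
  shows "measure_pmf.expectation (replicate_pmf k P) (\<lambda>W. prod_list (map g W))
    = (measure_pmf.expectation P g) ^ k"
proof (induction k)
  case (Suc k)
  have prod_bound: "\<bar>prod_list (map g W)\<bar> \<le> B ^ length W" if "set W \<subseteq> set_pmf P" for W
    using that bounded by (induction W) (auto simp: abs_mult intro!: mult_mono order.trans[OF _ bounded])
  have bound: "\<bar>prod_list (map g W)\<bar> \<le> B ^ Suc k"
    if "W \<in> set_pmf (bind_pmf P (\<lambda>x. map_pmf ((#) x) (replicate_pmf k P)))" for W
  proof -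
    from that have "set W \<subseteq> set_pmf P" and "length W = Suc k"
      by (auto simp: set_replicate_pmf)
    then show ?thesis using prod_bound by metis
  qed
  have "measure_pmf.expectation (replicate_pmf (Suc k) P) (\<lambda>W. prod_list (map g W))
      = measure_pmf.expectation (bind_pmf P (\<lambda>x. map_pmf ((#) x) (replicate_pmf k P)))
          (\<lambda>W. prod_list (map g W))"
    by (simp add: map_pmf_def)
  also have "\<dots> = measure_pmf.expectation P
      (\<lambda>x. measure_pmf.expectation (map_pmf ((#) x) (replicate_pmf k P)) (\<lambda>W. prod_list (map g W)))"
    using bound by (rule integral_bind_pmf)
  also have "\<dots> = (measure_pmf.expectation P g) ^ Suc k"
    by (simp add: Suc.IH)
  finally show ?case .
qed simp

lemma expectation_integral_swap:
  fixes g :: "'c \<Rightarrow> 'b::countable \<Rightarrow> real"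
  assumes M: "prob_space M"
    and measurable: "\<And>W. (\<lambda>\<phi>. g \<phi> W) \<in> borel_measurable M"
    and bounded: "\<And>W \<phi>. W \<in> set_pmf p \<Longrightarrow> \<phi> \<in> space M \<Longrightarrow> \<bar>g \<phi> W\<bar> \<le> B"
  shows "measure_pmf.expectation p (\<lambda>W. \<integral>\<phi>. g \<phi> W \<partial>M) = (\<integral>\<phi>. measure_pmf.expectation p (g \<phi>) \<partial>M)"
proof -
  interpret M: prob_space M by fact
  interpret pair_sigma_finite "measure_pmf p" M
    by (intro pair_sigma_finite.intro M.sigma_finite_measure_axioms
        measure_pmf.sigma_finite_measure_axioms)
  \<comment> \<open>Fubini needs integrability on the whole product, so cut \<open>g\<close> off outside the support.\<close>
  define g' where "g' \<phi> W = (if W \<in> set_pmf p then g \<phi> W else 0)" for \<phi> W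
  have "(\<lambda>(W, \<phi>). g' \<phi> W) \<in> borel_measurable (count_space UNIV \<Otimes>\<^sub>M M)"
  proof (rule measurable_pair_measure_countable1)
    show "(\<lambda>\<phi>. case (W, \<phi>) of (W, \<phi>) \<Rightarrow> g' \<phi> W) \<in> borel_measurable M" for W
      by (cases "W \<in> set_pmf p") (simp_all add: g'_def measurable)
  qed simp
  then have "(\<lambda>(W, \<phi>). g' \<phi> W) \<in> borel_measurable (measure_pmf p \<Otimes>\<^sub>M M)"
    by (subst measurable_cong_sets[OF sets_pair_measure_cong[OF sets_measure_pmf_count_space refl] refl])
  then have integrable: "integrable (measure_pmf p \<Otimes>\<^sub>M M) (\<lambda>(W, \<phi>). g' \<phi> W)"
    using prob_space_pair[OF measure_pmf.prob_space_axioms M]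
    by (intro finite_measure.integrable_const_bound[where B="\<bar>B\<bar>"] AE_I2)
       (auto simp: prob_space_def g'_def space_pair_measure dest!: bounded)
  have "measure_pmf.expectation p (\<lambda>W. \<integral>\<phi>. g' \<phi> W \<partial>M) = (\<integral>\<phi>. measure_pmf.expectation p (g' \<phi>) \<partial>M)"
    by (rule Fubini_integral[OF integrable, symmetric])
  moreover have "measure_pmf.expectation p (\<lambda>W. \<integral>\<phi>. g' \<phi> W \<partial>M) = measure_pmf.expectation p (\<lambda>W. \<integral>\<phi>. g \<phi> W \<partial>M)"
    by (rule integral_cong_AE) (auto simp: AE_measure_pmf_iff g'_def)
  moreover have "measure_pmf.expectation p (g' \<phi>) = measure_pmf.expectation p (g \<phi>)" for \<phi>
    by (rule integral_cong_AE) (auto simp: AE_measure_pmf_iff g'_def)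
  ultimately show ?thesis by simp
qed

section \<open>Resampling entries of a dataset\<close>

fun updates :: "'a list \<Rightarrow> nat list \<Rightarrow> 'a list \<Rightarrow> 'a list" where
  "updates xs (i # is) (y # ys) = updates (xs[i := y]) is ys"
| "updates xs _ _ = xs"

lemma length_updates[simp]: "length (updates xs is ys) = length xs"
  by (induction xs "is" ys rule: updates.induct) auto

lemma nth_updates_notin: "j \<notin> set is \<Longrightarrow> updates xs is ys ! j = xs ! j"
  by (induction xs "is" ys rule: updates.induct) auto

lemma map_nth_updates:
  "distinct is \<Longrightarrow> set is \<subseteq> {..<length xs} \<Longrightarrow> length ys = length is \<Longrightarrow>
    map (\<lambda>i. updates xs is ys ! i) is = ys"
  by (induction xs "is" ys rule: updates.induct) (auto simp: nth_updates_notin)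

lemma replicate_pmf_resample_nth:
  "i < n \<Longrightarrow> bind_pmf (replicate_pmf n P) (\<lambda>xs. map_pmf (\<lambda>y. xs[i := y]) P) = replicate_pmf n P"
proof (induction n arbitrary: i)
  case (Suc n)
  show ?case
  proof (cases i)
    case 0
    have "bind_pmf (replicate_pmf (Suc n) P) (\<lambda>xs. map_pmf (\<lambda>y. xs[i := y]) P)
        = bind_pmf P (\<lambda>_. bind_pmf (replicate_pmf n P) (\<lambda>xs. map_pmf (\<lambda>y. y # xs) P))"
      by (simp add: 0 bind_assoc_pmf bind_return_pmf map_pmf_def)
    also have "\<dots> = replicate_pmf (Suc n) P"
      by (simp add: bind_pmf_const map_pmf_def) (rule bind_commute_pmf)
    finally show ?thesis .
  next
    case (Suc j)
    then have "bind_pmf (replicate_pmf (Suc n) P) (\<lambda>xs. map_pmf (\<lambda>y. xs[i := y]) P)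
        = bind_pmf P (\<lambda>x. map_pmf ((#) x)
            (bind_pmf (replicate_pmf n P) (\<lambda>xs. map_pmf (\<lambda>y. xs[j := y]) P)))"
      by (simp add: bind_assoc_pmf bind_return_pmf map_pmf_def)
    with Suc Suc.prems Suc.IH show ?thesis
      by (simp add: map_pmf_def)
  qed
qed simp

lemma replicate_pmf_resample:
  "set is \<subseteq> {..<n} \<Longrightarrow>
    bind_pmf (replicate_pmf n P) (\<lambda>xs. map_pmf (updates xs is) (replicate_pmf (length is) P))
    = replicate_pmf n P"
proof (induction "is")
  case Nil
  then show ?case by (simp add: map_pmf_def bind_return_pmf')
next
  case (Cons i "is")
  then have "bind_pmf (replicate_pmf n P) (\<lambda>xs. map_pmf (updates xs (i # is)) (replicate_pmf (length (i # is)) P))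
      = bind_pmf (bind_pmf (replicate_pmf n P) (\<lambda>xs. map_pmf (\<lambda>y. xs[i := y]) P))
          (\<lambda>xs. map_pmf (updates xs is) (replicate_pmf (length is) P))"
    by (simp add: bind_assoc_pmf bind_return_pmf map_pmf_def)
  with Cons show ?case by (simp add: replicate_pmf_resample_nth)
qed

section \<open>Group privacy\<close>

lemma diff_private_mono:
  fixes A :: "'a list \<Rightarrow> ('a \<Rightarrow> real) measure"
  assumes "diff_private n \<epsilon> \<delta> A" and "\<epsilon> \<le> \<epsilon>'"
  shows "diff_private n \<epsilon>' \<delta> A"
  unfolding diff_private_def
proof (intro allI impI)
  fix x y :: "'a list" and T :: "('a \<Rightarrow> real) set" assume "adjacent n x y" and "T \<in> sets output_space"
  then have "measure (A x) T \<le> exp \<epsilon> * measure (A y) T + \<delta>"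
    using assms(1) by (simp add: diff_private_def)
  also have "\<dots> \<le> exp \<epsilon>' * measure (A y) T + \<delta>"
    using assms(2) by (intro add_right_mono mult_right_mono) auto
  finally show "measure (A x) T \<le> exp \<epsilon>' * measure (A y) T + \<delta>" .
qed

lemma adjacent_list_update:
  assumes "length S = n" and "i < n" and "w \<noteq> S ! i"
  shows "adjacent n (S[i := w]) S"
proof -
  have "{j. j < n \<and> S[i := w] ! j \<noteq> S ! j} = {i}"
    using assms by (auto simp: nth_list_update)
  then show ?thesis using assms(1) by (simp add: adjacent_def)
qed

lemma diff_private_integral_list_update:
  assumes alg: "rand_alg n A" and dp: "diff_private n \<epsilon> \<delta> A" and "0 \<le> \<epsilon>" and "0 \<le> \<delta>"
    and h: "h \<in> borel_measurable output_space"
    and bounds: "\<And>\<phi>. \<phi> \<in> space output_space \<Longrightarrow> 0 \<le> h \<phi> \<and> h \<phi> \<le> B"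
    and S: "length S = n" and i: "i < n"
  shows "(\<integral>\<phi>. h \<phi> \<partial>A (S[i := w])) \<le> exp \<epsilon> * (\<integral>\<phi>. h \<phi> \<partial>A S) + \<delta> * B"
proof (cases "w = S ! i")
  case True
  have "0 \<le> B" using bounds[of "\<lambda>_. 0"] by (simp add: space_output_space)
  moreover have "0 \<le> (\<integral>\<phi>. h \<phi> \<partial>A S)"
    using bounds rand_algD[OF alg S] by (intro Bochner_Integration.integral_nonneg) simp
  ultimately show ?thesis
    using True \<open>0 \<le> \<epsilon>\<close> \<open>0 \<le> \<delta>\<close>
    by (simp add: add_increasing2 mult_le_cancel_right1)
next
  case False
  then have "adjacent n (S[i := w]) S" using S i by (rule adjacent_list_update[rotated 2])
  show ?thesis
  proof (rule integral_le_of_measure_le)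
    show "measure (A (S[i := w])) T \<le> exp \<epsilon> * measure (A S) T + \<delta>" if "T \<in> sets (A S)" for T
      using dp that rand_algD(2)[OF alg S] \<open>adjacent n (S[i := w]) S\<close> by (simp add: diff_private_def)
    show "h \<in> borel_measurable (A S)"
      using h by (simp add: measurable_cong_sets[OF rand_algD(2)[OF alg S] refl])
  qed (use rand_algD[OF alg S] rand_algD[OF alg, of "S[i := w]"] S bounds assms(3,4) in auto)
qed

lemma diff_private_integral_updates:
  assumes alg: "rand_alg n A" and dp: "diff_private n \<epsilon> \<delta> A" and \<epsilon>: "0 \<le> \<epsilon>" and \<delta>: "0 \<le> \<delta>"
    and h: "h \<in> borel_measurable output_space"
    and bounds: "\<And>\<phi>. \<phi> \<in> space output_space \<Longrightarrow> 0 \<le> h \<phi> \<and> h \<phi> \<le> B"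
  shows "length S = n \<Longrightarrow> set is \<subseteq> {..<n} \<Longrightarrow> length ys = length is \<Longrightarrow>
    (\<integral>\<phi>. h \<phi> \<partial>A (updates S is ys))
      \<le> exp (real (length is) * \<epsilon>) * (\<integral>\<phi>. h \<phi> \<partial>A S)
        + real (length is) * exp (real (length is) * \<epsilon>) * \<delta> * B"
proof (induction S "is" ys rule: updates.induct)
  case (1 S i "is" y ys)
  define k where "k = real (length is)"
  have B: "0 \<le> B" using bounds[of "\<lambda>_. 0"] by (simp add: space_output_space)
  have "(\<integral>\<phi>. h \<phi> \<partial>A (updates (S[i := y]) is ys))
      \<le> exp (k * \<epsilon>) * (\<integral>\<phi>. h \<phi> \<partial>A (S[i := y])) + k * exp (k * \<epsilon>) * \<delta> * B"
    using 1 by (simp add: k_def)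
  also have "\<dots> \<le> exp (k * \<epsilon>) * (exp \<epsilon> * (\<integral>\<phi>. h \<phi> \<partial>A S) + \<delta> * B) + k * exp (k * \<epsilon>) * \<delta> * B"
    using 1 by (intro add_right_mono mult_left_mono diff_private_integral_list_update[OF assms]) auto
  also have "\<dots> = exp ((k + 1) * \<epsilon>) * (\<integral>\<phi>. h \<phi> \<partial>A S) + (k + 1) * exp (k * \<epsilon>) * \<delta> * B"
    by (simp add: algebra_simps exp_add)
  also have "\<dots> \<le> exp ((k + 1) * \<epsilon>) * (\<integral>\<phi>. h \<phi> \<partial>A S) + (k + 1) * exp ((k + 1) * \<epsilon>) * \<delta> * B"
    using \<epsilon> \<delta> B by (intro add_left_mono mult_right_mono mult_left_mono) (auto simp: k_def distrib_right)
  finally show ?case by (simp add: k_def add.commute)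
qed simp_all

section \<open>Moments of centered weights\<close>

definition centered_weight :: "real \<Rightarrow> 'a pmf \<Rightarrow> ('a \<Rightarrow> real) \<Rightarrow> 'a \<Rightarrow> real" where
  "centered_weight \<sigma> P \<phi> x = 1 + \<sigma> * (\<phi> x - pop_mean P \<phi>)"

lemma centered_weight_bounds:
  assumes "\<sigma> \<in> {-1, 1}" and "\<phi> \<in> space output_space"
  shows "0 \<le> centered_weight \<sigma> P \<phi> x \<and> centered_weight \<sigma> P \<phi> x \<le> 2"
proof -
  have "0 \<le> \<phi> x" and "\<phi> x \<le> 1" using assms(2) by (auto simp: space_output_space)
  then show ?thesis
    using assms(1) pop_mean_bounds[OF assms(2), of P] by (auto simp: centered_weight_def)
qed

lemma prod_centered_weight_bounds:
  assumes "\<sigma> \<in> {-1, 1}" and "\<phi> \<in> space output_space"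
  shows "0 \<le> prod_list (map (centered_weight \<sigma> P \<phi>) W)
    \<and> prod_list (map (centered_weight \<sigma> P \<phi>) W) \<le> 2 ^ length W"
  using centered_weight_bounds[OF assms, of P] by (induction W) (auto intro!: mult_mono)

lemma expectation_centered_weight:
  assumes "\<phi> \<in> space output_space"
  shows "measure_pmf.expectation P (centered_weight \<sigma> P \<phi>) = 1"
proof -
  have "integrable (measure_pmf P) \<phi>"
    using assms by (intro integrable_measure_pmf_bounded[where B=1]) (auto simp: space_output_space)
  then show ?thesis unfolding centered_weight_def by (simp add: pop_mean_def)
qed

lemma measurable_prod_centered_weight[measurable]:
  fixes P :: "'a::countable pmf"
  shows "(\<lambda>\<phi>. prod_list (map (centered_weight \<sigma> P \<phi>) W)) \<in> borel_measurable output_space"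
  by (induction W) (simp_all add: centered_weight_def)

lemma sum_centered_weight:
  assumes "length S = n"
  shows "(\<Sum>i<n. centered_weight \<sigma> P \<phi> (S ! i))
    = real n + \<sigma> * real n * (emp_mean S \<phi> - pop_mean P \<phi>)"
  using assms
  by (auto simp: centered_weight_def emp_mean_def sum_list_sum_nth atLeast0LessThan sum.distrib
      sum_subtractf algebra_simps simp flip: sum_distrib_left)

lemma expectation_resampled_prod_centered_weight:
  fixes P :: "'a::countable pmf"
  assumes M: "prob_space M" and sets_M: "sets M = sets output_space" and \<sigma>: "\<sigma> \<in> {-1, 1}"
  shows "measure_pmf.expectation (replicate_pmf t P)
      (\<lambda>W. \<integral>\<phi>. prod_list (map (centered_weight \<sigma> P \<phi>) W) \<partial>M) = 1"
proof -
  have space_M: "space M = space output_space" using sets_M by (rule sets_eq_imp_space_eq)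
  have "measure_pmf.expectation (replicate_pmf t P)
      (\<lambda>W. \<integral>\<phi>. prod_list (map (centered_weight \<sigma> P \<phi>) W) \<partial>M)
      = (\<integral>\<phi>. measure_pmf.expectation (replicate_pmf t P)
           (\<lambda>W. prod_list (map (centered_weight \<sigma> P \<phi>) W)) \<partial>M)"
  proof (rule expectation_integral_swap[OF M, where B="2 ^ t"])
    fix W \<phi> assume "W \<in> set_pmf (replicate_pmf t P)" and "\<phi> \<in> space M"
    then show "\<bar>prod_list (map (centered_weight \<sigma> P \<phi>) W)\<bar> \<le> 2 ^ t"
      using prod_centered_weight_bounds[OF \<sigma>, of \<phi> P W] by (simp add: space_M set_replicate_pmf)
  qed (simp add: measurable_cong_sets[OF sets_M refl])
  also have "\<dots> = (\<integral>\<phi>. 1 \<partial>M)"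
  proof (rule Bochner_Integration.integral_cong[OF refl])
    fix \<phi> assume "\<phi> \<in> space M"
    then have \<phi>: "\<phi> \<in> space output_space" by (simp add: space_M)
    show "measure_pmf.expectation (replicate_pmf t P) (\<lambda>W. prod_list (map (centered_weight \<sigma> P \<phi>) W)) = 1"
      using centered_weight_bounds[OF \<sigma> \<phi>]
      by (subst expectation_replicate_pmf_prod_list[where B=2]) (auto simp: expectation_centered_weight[OF \<phi>])
  qed
  also have "\<dots> = 1" using M by (simp add: prob_space.prob_space)
  finally show ?thesis .
qed

lemma integral_prod_centered_weight_bounds:
  fixes A :: "'a::countable list \<Rightarrow> ('a \<Rightarrow> real) measure"
  assumes alg: "rand_alg n A" and S: "length S = n" and \<sigma>: "\<sigma> \<in> {-1, 1}"
  shows "0 \<le> (\<integral>\<phi>. prod_list (map (centered_weight \<sigma> P \<phi>) W) \<partial>A S)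
    \<and> (\<integral>\<phi>. prod_list (map (centered_weight \<sigma> P \<phi>) W) \<partial>A S) \<le> 2 ^ length W"
  using rand_algD[OF alg S] prod_centered_weight_bounds[OF \<sigma>]
  by (intro prob_space.integral_bounds)
     (simp_all add: measurable_cong_sets[OF rand_algD(2)[OF alg S] refl])

lemma expectation_integral_updates_le:
  fixes A :: "'a::countable list \<Rightarrow> ('a \<Rightarrow> real) measure" and P :: "'a pmf"
  assumes alg: "rand_alg n A" and dp: "diff_private n \<epsilon> \<delta> A" and \<epsilon>: "0 \<le> \<epsilon>" and \<delta>: "0 \<le> \<delta>"
    and \<sigma>: "\<sigma> \<in> {-1, 1}" and "is": "distinct is" "set is \<subseteq> {..<n}" and S: "length S = n"
  defines "t \<equiv> length is"
  shows "measure_pmf.expectation (replicate_pmf t P)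
      (\<lambda>W. \<integral>\<phi>. prod_list (map (\<lambda>i. centered_weight \<sigma> P \<phi> (updates S is W ! i)) is) \<partial>A (updates S is W))
    \<le> exp (real t * \<epsilon>) * (1 + real t * \<delta> * 2 ^ t)"
proof -
  define G where "G S' W = (\<integral>\<phi>. prod_list (map (centered_weight \<sigma> P \<phi>) W) \<partial>A S')" for S' W
  define C where "C = real t * exp (real t * \<epsilon>) * \<delta> * 2 ^ t"
  have G_bounds: "0 \<le> G S' W \<and> G S' W \<le> 2 ^ length W" if "length S' = n" for S' W
    unfolding G_def using alg that \<sigma> by (rule integral_prod_centered_weight_bounds)
  have "measure_pmf.expectation (replicate_pmf t P)
      (\<lambda>W. \<integral>\<phi>. prod_list (map (\<lambda>i. centered_weight \<sigma> P \<phi> (updates S is W ! i)) is) \<partial>A (updates S is W))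
    \<le> measure_pmf.expectation (replicate_pmf t P) (\<lambda>W. exp (real t * \<epsilon>) * G S W + C)"
  proof (rule integral_mono_measure_pmf)
    fix W assume "W \<in> set_pmf (replicate_pmf t P)"
    then have W: "length W = t" by (simp add: set_replicate_pmf)
    have resampled_entries: "map (\<lambda>i. updates S is W ! i) is = W"
      using map_nth_updates[OF "is"(1), of S W] "is"(2) S W by (auto simp: t_def)
    have "map (\<lambda>i. centered_weight \<sigma> P \<phi> (updates S is W ! i)) is = map (centered_weight \<sigma> P \<phi>) W"
      for \<phi> by (subst resampled_entries[symmetric]) simp
    then have G_eq: "(\<integral>\<phi>. prod_list (map (\<lambda>i. centered_weight \<sigma> P \<phi> (updates S is W ! i)) is) \<partial>A (updates S is W))
        = G (updates S is W) W"
      by (simp add: G_def)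
    also have "\<dots> \<le> exp (real t * \<epsilon>) * G S W + C"
      unfolding G_def C_def
      using diff_private_integral_updates[OF alg dp \<epsilon> \<delta> measurable_prod_centered_weight[of \<sigma> P W]
          prod_centered_weight_bounds[OF \<sigma>, of _ P W], of S "is" W] "is"(2) S W
      by (simp add: t_def)
    finally show "(\<integral>\<phi>. prod_list (map (\<lambda>i. centered_weight \<sigma> P \<phi> (updates S is W ! i)) is) \<partial>A (updates S is W))
        \<le> exp (real t * \<epsilon>) * G S W + C" .
    show "\<bar>\<integral>\<phi>. prod_list (map (\<lambda>i. centered_weight \<sigma> P \<phi> (updates S is W ! i)) is) \<partial>A (updates S is W)\<bar>
        \<le> 2 ^ t"
      unfolding G_eq using G_bounds[of "updates S is W" W] S W by simp
    show "\<bar>exp (real t * \<epsilon>) * G S W + C\<bar> \<le> exp (real t * \<epsilon>) * 2 ^ t + C"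
      using G_bounds[OF S, of W] W \<delta> by (simp add: C_def)
  qed
  also have "\<dots> = exp (real t * \<epsilon>) * measure_pmf.expectation (replicate_pmf t P) (G S) + C"
  proof -
    have "integrable (measure_pmf (replicate_pmf t P)) (G S)"
    proof (rule integrable_measure_pmf_bounded)
      fix W assume "W \<in> set_pmf (replicate_pmf t P)"
      then show "\<bar>G S W\<bar> \<le> 2 ^ t" using G_bounds[OF S, of W] by (simp add: set_replicate_pmf)
    qed
    then show ?thesis by simp
  qed
  also have "measure_pmf.expectation (replicate_pmf t P) (G S) = 1"
    unfolding G_def using rand_algD[OF alg S] \<sigma> by (intro expectation_resampled_prod_centered_weight)
  finally show ?thesis by (simp add: C_def algebra_simps)
qed

lemma expectation_prod_centered_weight_le:
  fixes A :: "'a::countable list \<Rightarrow> ('a \<Rightarrow> real) measure" and P :: "'a pmf"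
  assumes alg: "rand_alg n A" and dp: "diff_private n \<epsilon> \<delta> A" and \<epsilon>: "0 \<le> \<epsilon>" and \<delta>: "0 \<le> \<delta>"
    and \<sigma>: "\<sigma> \<in> {-1, 1}" and "is": "distinct is" "set is \<subseteq> {..<n}"
  shows "measure_pmf.expectation (replicate_pmf n P)
      (\<lambda>S. \<integral>\<phi>. prod_list (map (\<lambda>i. centered_weight \<sigma> P \<phi> (S ! i)) is) \<partial>A S)
    \<le> exp (real (length is) * \<epsilon>) * (1 + real (length is) * \<delta> * 2 ^ length is)"
proof -
  define t where "t = length is"
  define F where "F S = (\<integral>\<phi>. prod_list (map (\<lambda>i. centered_weight \<sigma> P \<phi> (S ! i)) is) \<partial>A S)" for S
  have F_bounds: "0 \<le> F S \<and> F S \<le> 2 ^ t" if "length S = n" for S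
    using integral_prod_centered_weight_bounds[OF alg that \<sigma>, of P "map ((!) S) is"]
    by (simp add: F_def t_def comp_def)
  have "measure_pmf.expectation (replicate_pmf n P) F
      = measure_pmf.expectation (bind_pmf (replicate_pmf n P)
          (\<lambda>S. map_pmf (updates S is) (replicate_pmf t P))) F"
    by (simp add: replicate_pmf_resample[OF "is"(2)] t_def)
  also have "\<dots> = measure_pmf.expectation (replicate_pmf n P)
      (\<lambda>S. measure_pmf.expectation (replicate_pmf t P) (\<lambda>W. F (updates S is W)))"
    using F_bounds by (subst integral_bind_pmf[where B="2 ^ t"]) (auto simp: set_replicate_pmf)
  also have "\<dots> \<le> measure_pmf.expectation (replicate_pmf n P)
      (\<lambda>S. exp (real t * \<epsilon>) * (1 + real t * \<delta> * 2 ^ t))"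
  proof (rule integral_mono_measure_pmf)
    fix S assume "S \<in> set_pmf (replicate_pmf n P)"
    then have S: "length S = n" by (simp add: set_replicate_pmf)
    have le: "measure_pmf.expectation (replicate_pmf t P) (\<lambda>W. F (updates S is W))
        \<le> exp (real t * \<epsilon>) * (1 + real t * \<delta> * 2 ^ t)"
      unfolding F_def t_def by (rule expectation_integral_updates_le[OF alg dp \<epsilon> \<delta> \<sigma> "is" S])
    then show "measure_pmf.expectation (replicate_pmf t P) (\<lambda>W. F (updates S is W))
        \<le> exp (real t * \<epsilon>) * (1 + real t * \<delta> * 2 ^ t)" .
    have "0 \<le> measure_pmf.expectation (replicate_pmf t P) (\<lambda>W. F (updates S is W))"
      using F_bounds S by (intro Bochner_Integration.integral_nonneg) simp
    with le show "\<bar>measure_pmf.expectation (replicate_pmf t P) (\<lambda>W. F (updates S is W))\<bar>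
        \<le> exp (real t * \<epsilon>) * (1 + real t * \<delta> * 2 ^ t)"
      by simp
    show "\<bar>exp (real t * \<epsilon>) * (1 + real t * \<delta> * 2 ^ t)\<bar> \<le> exp (real t * \<epsilon>) * (1 + real t * \<delta> * 2 ^ t)"
      using \<delta> by simp
  qed
  finally show ?thesis unfolding F_def[abs_def] t_def by simp
qed

section \<open>Tuples of distinct indices\<close>

definition distinct_tuples :: "nat \<Rightarrow> 'a set \<Rightarrow> 'a list set" where
  "distinct_tuples t I = {xs. length xs = t \<and> distinct xs \<and> set xs \<subseteq> I}"

lemma finite_distinct_tuples: "finite I \<Longrightarrow> finite (distinct_tuples t I)"
  unfolding distinct_tuples_def
  by (rule finite_subset[OF _ finite_lists_length_eq[of I t]]) auto

lemma distinct_tuples_0: "distinct_tuples 0 I = {[]}"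
  by (auto simp: distinct_tuples_def)

lemma distinct_tuples_Suc:
  "distinct_tuples (Suc t) I = (\<Union>i\<in>I. (#) i ` distinct_tuples t (I - {i}))"
proof (intro set_eqI iffI)
  fix xs assume "xs \<in> distinct_tuples (Suc t) I"
  then obtain y ys where "xs = y # ys" "y \<in> I" "ys \<in> distinct_tuples t (I - {y})"
    by (fastforce simp: distinct_tuples_def length_Suc_conv)
  then show "xs \<in> (\<Union>i\<in>I. (#) i ` distinct_tuples t (I - {i}))" by auto
qed (auto simp: distinct_tuples_def)

lemma card_distinct_tuples_le: "card (distinct_tuples t {..<n}) \<le> n ^ t"
proof -
  have "card (distinct_tuples t {..<n}) \<le> card {xs. set xs \<subseteq> {..<n} \<and> length xs = t}"
    by (rule card_mono) (auto simp: distinct_tuples_def intro: finite_lists_length_eq)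
  then show ?thesis by (simp add: card_lists_length_eq)
qed

lemma card_distinct_tuples_pos:
  assumes "t \<le> n"
  shows "0 < card (distinct_tuples t {..<n})"
proof -
  have "[0..<t] \<in> distinct_tuples t {..<n}" using assms by (auto simp: distinct_tuples_def)
  then show ?thesis using finite_distinct_tuples[of "{..<n}" t] card_gt_0_iff by blast
qed

text \<open>Expanding the product \<open>(\<Sum>v)^t\<close> over tuples of distinct indices loses at most \<open>c\<close> per
  factor: after an index is used, the remaining weights still sum to at least \<open>\<Sum>v - c\<close>.\<close>
lemma prod_sum_diff_le_sum_distinct_tuples:
  fixes v :: "'a \<Rightarrow> real"
  assumes "finite I" and "\<And>i. i \<in> I \<Longrightarrow> 0 \<le> v i \<and> v i \<le> c"
    and "c * real t \<le> (\<Sum>i\<in>I. v i) + c"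
  shows "(\<Prod>j<t. (\<Sum>i\<in>I. v i) - c * real j) \<le> (\<Sum>xs\<in>distinct_tuples t I. prod_list (map v xs))"
  using assms
proof (induction t arbitrary: I)
  case 0
  then show ?case by (simp add: distinct_tuples_0)
next
  case (Suc t)
  define s where "s = (\<Sum>i\<in>I. v i)"
  have sum_remove: "(\<Sum>i\<in>I - {i}. v i) = s - v i" if "i \<in> I" for i
    unfolding s_def using Suc.prems(1) that by (simp add: sum_diff1)
  have IH: "(\<Prod>j<t. s - c - c * real j) \<le> (\<Sum>ys\<in>distinct_tuples t (I - {i}). prod_list (map v ys))"
    if i: "i \<in> I" for i
  proof -
    have "(\<Prod>j<t. s - c - c * real j) \<le> (\<Prod>j<t. (\<Sum>i\<in>I - {i}. v i) - c * real j)"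
    proof (rule prod_mono)
      fix j assume "j \<in> {..<t}"
      then have "c * (real j + 1) \<le> c * real t"
        using Suc.prems(2)[OF i] by (intro mult_left_mono) auto
      then show "0 \<le> s - c - c * real j \<and> s - c - c * real j \<le> (\<Sum>i\<in>I - {i}. v i) - c * real j"
        using Suc.prems(2)[OF i] Suc.prems(3) sum_remove[OF i] by (auto simp: s_def algebra_simps)
    qed
    also have "\<dots> \<le> (\<Sum>ys\<in>distinct_tuples t (I - {i}). prod_list (map v ys))"
      using Suc.prems Suc.prems(2)[OF i] sum_remove[OF i]
      by (intro Suc.IH) (auto simp: s_def algebra_simps)
    finally show ?thesis .
  qed
  have "(\<Prod>j<Suc t. s - c * real j) = s * (\<Prod>j<t. s - c - c * real j)"
    by (subst prod.lessThan_Suc_shift) (simp add: algebra_simps)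
  also have "\<dots> = (\<Sum>i\<in>I. v i * (\<Prod>j<t. s - c - c * real j))"
    by (simp add: s_def sum_distrib_right)
  also have "\<dots> \<le> (\<Sum>i\<in>I. v i * (\<Sum>ys\<in>distinct_tuples t (I - {i}). prod_list (map v ys)))"
    using IH Suc.prems(2) by (intro sum_mono mult_left_mono) auto
  also have "\<dots> = (\<Sum>xs\<in>distinct_tuples (Suc t) I. prod_list (map v xs))"
    unfolding distinct_tuples_Suc using Suc.prems(1)
    by (subst sum.UNION_disjoint)
       (auto simp: finite_distinct_tuples sum.reindex inj_on_def sum_distrib_left)
  finally show ?case by (simp add: s_def)
qed

lemma power_le_average_distinct_tuples:
  fixes v :: "nat \<Rightarrow> real"
  assumes bounds: "\<And>i. i < n \<Longrightarrow> 0 \<le> v i \<and> v i \<le> c" and "t \<le> n"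
    and sum: "c * real t \<le> (\<Sum>i<n. v i)"
  shows "(((\<Sum>i<n. v i) - c * real t) / real n) ^ t
    \<le> (\<Sum>xs\<in>distinct_tuples t {..<n}. prod_list (map v xs)) / card (distinct_tuples t {..<n})"
proof (cases "n = 0")
  case True
  then show ?thesis using \<open>t \<le> n\<close> by (simp add: distinct_tuples_0)
next
  case False
  define s where "s = (\<Sum>i<n. v i)"
  define D where "D = distinct_tuples t {..<n}"
  have c: "0 \<le> c" using bounds[of 0] False by auto
  have s: "0 \<le> s - c * real t" using sum by (simp add: s_def)
  have D: "0 < real (card D)" "real (card D) \<le> real n ^ t"
    using card_distinct_tuples_pos[OF \<open>t \<le> n\<close>] card_distinct_tuples_le[of t n]
    by (simp_all add: D_def flip: of_nat_power)
  have "(s - c * real t) ^ t = (\<Prod>j<t. s - c * real t)" by simp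
  also have "\<dots> \<le> (\<Prod>j<t. s - c * real j)"
    using s c by (intro prod_mono) (auto intro: mult_left_mono)
  also have "\<dots> \<le> (\<Sum>xs\<in>D. prod_list (map v xs))"
    unfolding s_def D_def
    using bounds sum c by (intro prod_sum_diff_le_sum_distinct_tuples) auto
  finally have expand: "(s - c * real t) ^ t \<le> (\<Sum>xs\<in>D. prod_list (map v xs))" .
  have "((s - c * real t) / real n) ^ t = (s - c * real t) ^ t / real n ^ t"
    by (simp add: power_divide)
  also have "\<dots> \<le> (s - c * real t) ^ t / real (card D)"
    using s D False by (intro divide_left_mono) auto
  also have "\<dots> \<le> (\<Sum>xs\<in>D. prod_list (map v xs)) / real (card D)"
    using expand D by (intro divide_right_mono) auto
  finally show ?thesis by (simp add: s_def D_def)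
qed

section \<open>Tail bounds\<close>

lemma power_le_average_prod_centered_weight:
  assumes \<sigma>: "\<sigma> \<in> {-1, 1}" and \<phi>: "\<phi> \<in> space output_space" and S: "length S = n"
    and "t \<le> n" and "0 < n" and K: "0 \<le> 1 + \<tau> - 2 * real t / real n"
    and deviation: "\<tau> < \<sigma> * (emp_mean S \<phi> - pop_mean P \<phi>)"
  shows "(1 + \<tau> - 2 * real t / real n) ^ t
    \<le> (\<Sum>xs\<in>distinct_tuples t {..<n}. prod_list (map (\<lambda>i. centered_weight \<sigma> P \<phi> (S ! i)) xs))
      / card (distinct_tuples t {..<n})"
proof -
  define v where "v i = centered_weight \<sigma> P \<phi> (S ! i)" for i
  have "real n * \<tau> < real n * (\<sigma> * (emp_mean S \<phi> - pop_mean P \<phi>))"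
    using deviation \<open>0 < n\<close> by simp
  moreover have "(\<Sum>i<n. v i) = real n + real n * (\<sigma> * (emp_mean S \<phi> - pop_mean P \<phi>))"
    unfolding v_def sum_centered_weight[OF S] by (simp add: algebra_simps)
  moreover have "real n * (1 + \<tau> - 2 * real t / real n) = real n + real n * \<tau> - 2 * real t"
    using \<open>0 < n\<close> by (simp add: field_simps)
  ultimately have "real n * (1 + \<tau> - 2 * real t / real n) + 2 * real t < (\<Sum>i<n. v i)"
    by linarith
  moreover have "0 \<le> real n * (1 + \<tau> - 2 * real t / real n)" using K by simp
  ultimately have "2 * real t \<le> (\<Sum>i<n. v i)"
    and "1 + \<tau> - 2 * real t / real n \<le> ((\<Sum>i<n. v i) - 2 * real t) / real n"
    using \<open>0 < n\<close> by (linarith, simp add: field_simps)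
  then have "(1 + \<tau> - 2 * real t / real n) ^ t \<le> (((\<Sum>i<n. v i) - 2 * real t) / real n) ^ t"
    using K by (intro power_mono) auto
  also have "\<dots> \<le> (\<Sum>xs\<in>distinct_tuples t {..<n}. prod_list (map v xs)) / card (distinct_tuples t {..<n})"
    using centered_weight_bounds[OF \<sigma> \<phi>] \<open>t \<le> n\<close> \<open>2 * real t \<le> (\<Sum>i<n. v i)\<close>
    by (intro power_le_average_distinct_tuples) (auto simp: v_def)
  finally show ?thesis unfolding v_def .
qed

lemma prob_signed_deviation_le:
  fixes A :: "'a::countable list \<Rightarrow> ('a \<Rightarrow> real) measure" and P :: "'a pmf"
  assumes alg: "rand_alg n A" and \<sigma>: "\<sigma> \<in> {-1, 1}" and S: "length S = n"
    and "t \<le> n" and "0 < n" and K: "0 < 1 + \<tau> - 2 * real t / real n"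
  defines "D \<equiv> distinct_tuples t {..<n}"
  shows "measure (A S) {\<phi> \<in> space output_space. \<tau> < \<sigma> * (emp_mean S \<phi> - pop_mean P \<phi>)}
    \<le> (\<Sum>xs\<in>D. \<integral>\<phi>. prod_list (map (\<lambda>i. centered_weight \<sigma> P \<phi> (S ! i)) xs) \<partial>A S)
        / card D / (1 + \<tau> - 2 * real t / real n) ^ t"
proof -
  interpret prob_space "A S" using rand_algD[OF alg S] by simp
  define f where "f \<phi> xs = prod_list (map (\<lambda>i. centered_weight \<sigma> P \<phi> (S ! i)) xs)" for \<phi> xs
  define avg where "avg \<phi> = (\<Sum>xs\<in>D. f \<phi> xs) / card D" for \<phi>
  have D: "finite D" "0 < real (card D)"
    using finite_distinct_tuples card_distinct_tuples_pos[OF \<open>t \<le> n\<close>] by (auto simp: D_def)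
  have space: "space (A S) = space output_space" by (rule rand_algD[OF alg S])
  have f_bounds: "0 \<le> f \<phi> xs \<and> f \<phi> xs \<le> 2 ^ t" if "xs \<in> D" "\<phi> \<in> space output_space" for \<phi> xs
    using prod_centered_weight_bounds[OF \<sigma> that(2), of P "map ((!) S) xs"] that(1)
    by (simp add: f_def comp_def D_def distinct_tuples_def)
  have integrable: "integrable (A S) (\<lambda>\<phi>. f \<phi> xs)" if "xs \<in> D" for xs
    using f_bounds[OF that] measurable_prod_centered_weight[of \<sigma> P "map ((!) S) xs"]
    by (intro integrable_const_bound[where B="2 ^ t"] AE_I2)
       (auto simp: space f_def comp_def measurable_cong_sets[OF rand_algD(2)[OF alg S] refl])
  have "measure (A S) {\<phi> \<in> space output_space. \<tau> < \<sigma> * (emp_mean S \<phi> - pop_mean P \<phi>)}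
      \<le> expectation avg / (1 + \<tau> - 2 * real t / real n) ^ t"
  proof (rule prob_le_expectation_div)
    show "{\<phi> \<in> space output_space. \<tau> < \<sigma> * (emp_mean S \<phi> - pop_mean P \<phi>)} \<in> events"
      by (simp add: rand_algD[OF alg S])
    show "integrable (A S) avg" unfolding avg_def using integrable by simp
    show "0 < (1 + \<tau> - 2 * real t / real n) ^ t" using K by simp
    show "0 \<le> avg \<phi>" if "\<phi> \<in> space (A S)" for \<phi>
      using that f_bounds unfolding avg_def space by (intro divide_nonneg_nonneg sum_nonneg) auto
    show "(1 + \<tau> - 2 * real t / real n) ^ t \<le> avg \<phi>"
      if "\<phi> \<in> {\<phi> \<in> space output_space. \<tau> < \<sigma> * (emp_mean S \<phi> - pop_mean P \<phi>)}" for \<phi>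
      using that \<sigma> S \<open>t \<le> n\<close> \<open>0 < n\<close> K unfolding avg_def D_def f_def
      by (intro power_le_average_prod_centered_weight) auto
  qed
  also have "expectation avg = (\<Sum>xs\<in>D. \<integral>\<phi>. f \<phi> xs \<partial>A S) / card D"
    unfolding avg_def using integrable by simp
  finally show ?thesis by (simp add: f_def)
qed

lemma signed_deviation_tail_bound:
  fixes A :: "'a::countable list \<Rightarrow> ('a \<Rightarrow> real) measure" and P :: "'a pmf"
  assumes alg: "rand_alg n A" and dp: "diff_private n \<epsilon> \<delta> A" and \<epsilon>: "0 \<le> \<epsilon>" and \<delta>: "0 \<le> \<delta>"
    and \<sigma>: "\<sigma> \<in> {-1, 1}" and "t \<le> n" and "0 < n" and K: "0 < 1 + \<tau> - 2 * real t / real n"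
  shows "measure_pmf.expectation (replicate_pmf n P)
      (\<lambda>S. measure (A S) {\<phi> \<in> space output_space. \<tau> < \<sigma> * (emp_mean S \<phi> - pop_mean P \<phi>)})
    \<le> exp (real t * \<epsilon>) * (1 + real t * \<delta> * 2 ^ t) / (1 + \<tau> - 2 * real t / real n) ^ t"
proof -
  define K where "K = 1 + \<tau> - 2 * real t / real n"
  define D where "D = distinct_tuples t {..<n}"
  define E where "E S = {\<phi> \<in> space output_space. \<tau> < \<sigma> * (emp_mean S \<phi> - pop_mean P \<phi>)}" for S
  define F where "F S xs = (\<integral>\<phi>. prod_list (map (\<lambda>i. centered_weight \<sigma> P \<phi> (S ! i)) xs) \<partial>A S)"
    for S xs
  define bound where "bound = exp (real t * \<epsilon>) * (1 + real t * \<delta> * 2 ^ t)"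
  have D: "finite D" "0 < real (card D)"
    using finite_distinct_tuples card_distinct_tuples_pos[OF \<open>t \<le> n\<close>] by (auto simp: D_def)
  have tuple: "length xs = t" "distinct xs" "set xs \<subseteq> {..<n}" if "xs \<in> D" for xs
    using that by (auto simp: D_def distinct_tuples_def)
  have F_bounds: "0 \<le> F S xs \<and> F S xs \<le> 2 ^ t" if "xs \<in> D" "length S = n" for S xs
    using integral_prod_centered_weight_bounds[OF alg that(2) \<sigma>, of P "map ((!) S) xs"] tuple[OF that(1)]
    by (simp add: F_def comp_def)
  have K_pos: "0 < K ^ t" using K by (simp add: K_def)
  have "measure_pmf.expectation (replicate_pmf n P) (\<lambda>S. measure (A S) (E S))
      \<le> measure_pmf.expectation (replicate_pmf n P) (\<lambda>S. (\<Sum>xs\<in>D. F S xs) / card D / K ^ t)"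
  proof (rule integral_mono_measure_pmf)
    fix S assume "S \<in> set_pmf (replicate_pmf n P)"
    then have S: "length S = n" by (simp add: set_replicate_pmf)
    show "measure (A S) (E S) \<le> (\<Sum>xs\<in>D. F S xs) / card D / K ^ t"
      unfolding E_def F_def D_def K_def using alg \<sigma> S \<open>t \<le> n\<close> \<open>0 < n\<close> K
      by (rule prob_signed_deviation_le)
    show "\<bar>measure (A S) (E S)\<bar> \<le> 1"
      using prob_space.prob_le_1[OF rand_algD(1)[OF alg S]] by simp
    have "(\<Sum>xs\<in>D. F S xs) \<le> card D * 2 ^ t" and "0 \<le> (\<Sum>xs\<in>D. F S xs)"
      using F_bounds[OF _ S] sum_bounded_above[of D "F S" "2 ^ t"] by (auto intro: sum_nonneg)
    then have "0 \<le> (\<Sum>xs\<in>D. F S xs) / card D" and "(\<Sum>xs\<in>D. F S xs) / card D \<le> 2 ^ t"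
      using D by (simp_all add: divide_le_eq mult.commute)
    then show "\<bar>(\<Sum>xs\<in>D. F S xs) / card D / K ^ t\<bar> \<le> 2 ^ t / K ^ t"
      using K_pos by (metis abs_of_nonneg divide_nonneg_pos divide_right_mono less_le)
  qed
  also have "\<dots> = (\<Sum>xs\<in>D. measure_pmf.expectation (replicate_pmf n P) (\<lambda>S. F S xs)) / card D / K ^ t"
  proof -
    have "integrable (measure_pmf (replicate_pmf n P)) (\<lambda>S. F S xs)" if "xs \<in> D" for xs
      using F_bounds[OF that]
      by (intro integrable_measure_pmf_bounded[where B="2 ^ t"]) (simp add: set_replicate_pmf)
    then show ?thesis by simp
  qed
  also have "\<dots> \<le> (\<Sum>xs\<in>D. bound) / card D / K ^ t"
  proof -
    have "measure_pmf.expectation (replicate_pmf n P) (\<lambda>S. F S xs) \<le> bound" if "xs \<in> D" for xs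
      using expectation_prod_centered_weight_le[OF alg dp \<epsilon> \<delta> \<sigma> tuple(2,3)[OF that], of P] tuple(1)[OF that]
      by (simp add: F_def bound_def)
    then show ?thesis using D K_pos by (intro divide_right_mono sum_mono) auto
  qed
  also have "\<dots> = bound / K ^ t" using D by (simp add: card_gt_0_iff)
  finally show ?thesis by (simp add: E_def bound_def K_def)
qed

lemma measure_deviation_le:
  fixes P :: "'a::countable pmf"
  assumes "prob_space M" and sets_M: "sets M = sets output_space"
  shows "measure M {\<phi> \<in> space output_space. \<tau> < \<bar>pop_mean P \<phi> - emp_mean S \<phi>\<bar>}
    \<le> measure M {\<phi> \<in> space output_space. \<tau> < 1 * (emp_mean S \<phi> - pop_mean P \<phi>)}
      + measure M {\<phi> \<in> space output_space. \<tau> < -1 * (emp_mean S \<phi> - pop_mean P \<phi>)}"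
proof -
  interpret prob_space M by fact
  define E where "E \<sigma> = {\<phi> \<in> space output_space. \<tau> < \<sigma> * (emp_mean S \<phi> - pop_mean P \<phi>)}"
    for \<sigma> :: real
  have E: "E \<sigma> \<in> events" for \<sigma> unfolding E_def by (simp add: sets_M)
  moreover have "{\<phi> \<in> space output_space. \<tau> < \<bar>pop_mean P \<phi> - emp_mean S \<phi>\<bar>} \<subseteq> E 1 \<union> E (-1)"
    by (auto simp: E_def)
  ultimately have "measure M {\<phi> \<in> space output_space. \<tau> < \<bar>pop_mean P \<phi> - emp_mean S \<phi>\<bar>}
      \<le> measure M (E 1 \<union> E (-1))"
    by (intro finite_measure_mono) auto
  also have "\<dots> \<le> measure M (E 1) + measure M (E (-1))"
    using E[of 1] E[of "-1"] by (rule measure_Un_le)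
  finally show ?thesis by (simp add: E_def)
qed

lemma deviation_tail_bound:
  fixes A :: "'a::countable list \<Rightarrow> ('a \<Rightarrow> real) measure" and P :: "'a pmf"
  assumes alg: "rand_alg n A" and dp: "diff_private n \<epsilon> \<delta> A" and \<epsilon>: "0 \<le> \<epsilon>" and \<delta>: "0 \<le> \<delta>"
    and "t \<le> n" and "0 < n" and K: "0 < 1 + \<tau> - 2 * real t / real n"
  shows "measure_pmf.expectation (replicate_pmf n P)
      (\<lambda>S. measure (A S) {\<phi> \<in> space output_space. \<tau> < \<bar>pop_mean P \<phi> - emp_mean S \<phi>\<bar>})
    \<le> 2 * (exp (real t * \<epsilon>) * (1 + real t * \<delta> * 2 ^ t) / (1 + \<tau> - 2 * real t / real n) ^ t)"
proof -
  define E where "E \<sigma> S = {\<phi> \<in> space output_space. \<tau> < \<sigma> * (emp_mean S \<phi> - pop_mean P \<phi>)}"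
    for \<sigma> :: real and S
  define bound where "bound = exp (real t * \<epsilon>) * (1 + real t * \<delta> * 2 ^ t) / (1 + \<tau> - 2 * real t / real n) ^ t"
  have E_bound: "measure_pmf.expectation (replicate_pmf n P) (\<lambda>S. measure (A S) (E \<sigma> S)) \<le> bound"
    if "\<sigma> \<in> {-1, 1}" for \<sigma>
    unfolding E_def bound_def using assms that by (intro signed_deviation_tail_bound) auto
  have integrable: "integrable (measure_pmf (replicate_pmf n P)) (\<lambda>S. measure (A S) (E \<sigma> S))" for \<sigma>
    using prob_space.prob_le_1[OF rand_algD(1)[OF alg]]
    by (intro integrable_measure_pmf_bounded[where B=1]) (simp add: set_replicate_pmf)
  have "measure_pmf.expectation (replicate_pmf n P)
      (\<lambda>S. measure (A S) {\<phi> \<in> space output_space. \<tau> < \<bar>pop_mean P \<phi> - emp_mean S \<phi>\<bar>})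
    \<le> measure_pmf.expectation (replicate_pmf n P) (\<lambda>S. measure (A S) (E 1 S) + measure (A S) (E (-1) S))"
  proof (rule integral_mono_measure_pmf[where B=1 and B'=2])
    fix S assume "S \<in> set_pmf (replicate_pmf n P)"
    then have S: "length S = n" by (simp add: set_replicate_pmf)
    have prob: "0 \<le> measure (A S) X \<and> measure (A S) X \<le> 1" for X
      using prob_space.prob_le_1[OF rand_algD(1)[OF alg S]] by simp
    show "measure (A S) {\<phi> \<in> space output_space. \<tau> < \<bar>pop_mean P \<phi> - emp_mean S \<phi>\<bar>}
      \<le> measure (A S) (E 1 S) + measure (A S) (E (-1) S)"
      unfolding E_def using rand_algD(1,2)[OF alg S] by (rule measure_deviation_le)
    show "\<bar>measure (A S) {\<phi> \<in> space output_space. \<tau> < \<bar>pop_mean P \<phi> - emp_mean S \<phi>\<bar>}\<bar> \<le> 1"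
      using prob by simp
    show "\<bar>measure (A S) (E 1 S) + measure (A S) (E (-1) S)\<bar> \<le> 2"
      using prob[of "E 1 S"] prob[of "E (-1) S"] by simp
  qed
  also have "\<dots> \<le> 2 * bound"
    using E_bound[of 1] E_bound[of "-1"] integrable by simp
  finally show ?thesis by (simp add: bound_def)
qed

section \<open>Choice of the moment order\<close>

lemma ln_add_one_ge:
  fixes x :: real
  assumes "0 \<le> x"
  shows "2 * x / (2 + x) \<le> ln (1 + x)"
proof -
  let ?f = "\<lambda>y::real. ln (1 + y) - 2 * y / (2 + y)"
  have "?f 0 \<le> ?f x"
  proof (rule DERIV_nonneg_imp_nondecreasing[OF assms])
    fix y :: real assume y: "0 \<le> y" "y \<le> x"
    have "DERIV ?f y :> 1 / (1 + y) - 4 / (2 + y)\<^sup>2"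
      using y by (auto intro!: derivative_eq_intros simp: field_simps power2_eq_square)
    moreover have "4 * (1 + y) \<le> (2 + y)\<^sup>2" by (simp add: power2_eq_square algebra_simps)
    then have "4 / (2 + y)\<^sup>2 \<le> 1 / (1 + y)"
      using y by (simp add: field_simps)
    ultimately show "\<exists>d. DERIV ?f y :> d \<and> 0 \<le> d" by auto
  qed
  then show ?thesis by simp
qed

lemma exp_div_power_le:
  fixes \<tau> s L :: real
  assumes "0 < \<tau>" and "\<tau> < 1" and "0 \<le> s" and s: "s \<le> 13 / 48 * \<tau>" and t: "5 * L \<le> real t * \<tau>"
  shows "exp (real t * (\<tau> / 4)) / (1 + \<tau> - s) ^ t \<le> exp (- (170 / 144) * L)"
proof -
  define x where "x = \<tau> - s"
  have x: "35 / 48 * \<tau> \<le> x" "x \<le> \<tau>" "0 \<le> x" using assms by (auto simp: x_def)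
  have "70 / 144 * \<tau> \<le> 2 * x / 3" using x by simp
  also have "\<dots> \<le> 2 * x / (2 + x)" using x \<open>\<tau> < 1\<close> by (intro divide_left_mono) auto
  also have "\<dots> \<le> ln (1 + x)" using x by (intro ln_add_one_ge) auto
  finally have ln: "70 / 144 * \<tau> \<le> ln (1 + x)" .
  have "real t * (\<tau> / 4) - real t * ln (1 + x) = real t * (\<tau> / 4 - ln (1 + x))"
    by (simp add: algebra_simps)
  also have "\<dots> \<le> real t * (\<tau> / 4 - 70 / 144 * \<tau>)"
    using ln by (intro mult_left_mono) auto
  also have "\<dots> = - (34 / 144) * (real t * \<tau>)" by (simp add: algebra_simps)
  also have "\<dots> \<le> - (170 / 144) * L" using t by linarith
  finally have "real t * (\<tau> / 4) - real t * ln (1 + x) \<le> - (170 / 144) * L" .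
  moreover have "(1 + \<tau> - s) ^ t = exp (real t * ln (1 + x))"
    using x by (simp add: x_def exp_of_nat_mult algebra_simps)
  ultimately show ?thesis by (simp add: exp_diff[symmetric])
qed

lemma privacy_term_bound:
  fixes L u :: real
  assumes L: "2 / 3 \<le> L" and u: "1 < u" and t: "real t \<le> 5 * L * u + 1"
  shows "real t * exp (- 4 * (L + 2 * ln 2) * u) * 2 ^ t \<le> 11 / 128"
proof -
  have Lu: "0 < L * u" using L u by simp
  have "real t * ln 2 \<le> (5 * L * u + 1) * ln 2" using t by (intro mult_right_mono) auto
  also have "\<dots> \<le> (125 / 36) * (L * u) + ln 2"
    using mult_left_mono[OF ln2_le_25_over_36, of "L * u"] Lu by (simp add: algebra_simps)
  finally have "real t * ln 2 \<le> (125 / 36) * (L * u) + ln 2" .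
  moreover have "ln 2 \<le> ln 2 * u" using u by simp
  moreover have "real t * ln 2 - 4 * (L + 2 * ln 2) * u = real t * ln 2 - 4 * (L * u) - 8 * (ln 2 * u)"
    by (simp add: algebra_simps)
  ultimately have exponent: "real t * ln 2 - 4 * (L + 2 * ln 2) * u \<le> - (L * u / 2) - 7 * ln 2"
    using Lu by linarith
  have t_exp: "real t \<le> 11 * exp (L * u / 2)"
    using t exp_ge_add_one_self[of "L * u / 2"] one_le_exp_iff[of "L * u / 2"] Lu by linarith
  have "(2::real) ^ t = exp (real t * ln 2)" by (simp add: exp_of_nat_mult)
  then have "real t * exp (- 4 * (L + 2 * ln 2) * u) * 2 ^ t
      = real t * exp (real t * ln 2 - 4 * (L + 2 * ln 2) * u)"
    by (simp add: exp_add[symmetric] algebra_simps)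
  also have "\<dots> \<le> 11 * exp (L * u / 2) * exp (- (L * u / 2) - 7 * ln 2)"
    using t_exp exponent by (intro mult_mono) auto
  also have "\<dots> = 11 * exp (- (7 * ln 2))" by (simp add: exp_add[symmetric])
  also have "exp (- (7 * ln 2)) = (1 / 128 :: real)"
    by (simp add: exp_minus exp_of_nat_mult[of 7, simplified] inverse_eq_divide)
  finally show ?thesis by simp
qed

lemma moment_order_bounds:
  fixes L u :: real
  assumes L: "2 / 3 \<le> L" and u: "1 < u" and n: "48 * L * u\<^sup>2 \<le> real n"
  defines "t \<equiv> nat \<lceil>5 * L * u\<rceil>"
  shows "5 * L * u \<le> real t" and "real t \<le> 5 * L * u + 1" and "t \<le> n" and "0 < n"
    and "2 * real t / real n \<le> 13 / 48 * (1 / u)"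
proof -
  have Lu: "0 < L * u" using L u by simp
  show t_ge: "5 * L * u \<le> real t" and t_le: "real t \<le> 5 * L * u + 1"
    using Lu by (auto simp: t_def)
  have u2: "u \<le> u\<^sup>2" using u by (simp add: power2_eq_square)
  have "5 * L * u \<le> 5 * L * u\<^sup>2" using u2 L by (intro mult_left_mono) auto
  moreover have "43 * L * 1 \<le> 43 * L * u\<^sup>2" using u2 u L by (intro mult_left_mono) auto
  then have "1 \<le> 43 * L * u\<^sup>2" using L by linarith
  ultimately have "5 * L * u + 1 \<le> 48 * L * u\<^sup>2" by simp
  then show "t \<le> n" using t_le n by linarith
  have Lu2: "0 < 48 * L * u\<^sup>2" using L u by simp
  then have n_pos: "0 < real n" using n by linarith
  then show "0 < n" by simp
  have "2 * real t / real n \<le> (10 * L * u + 2) / (48 * L * u\<^sup>2)"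
    using t_le n Lu Lu2 n_pos by (intro frac_le) auto
  also have "\<dots> \<le> 13 / 48 * (1 / u)"
  proof -
    have "3 * L * 1 \<le> 3 * L * u" using L u by (intro mult_left_mono) auto
    then have "2 \<le> 3 * (L * u)" using L by linarith
    then show ?thesis using Lu L u by (simp add: field_simps power2_eq_square)
  qed
  finally show "2 * real t / real n \<le> 13 / 48 * (1 / u)" .
qed

lemma constant_factor_le_beta:
  fixes \<beta> :: real
  assumes "0 < \<beta>" and L: "2 / 3 \<le> ln (2 / \<beta>)"
  shows "2 * ((1 + 11 / 128) * exp (- (170 / 144) * ln (2 / \<beta>))) \<le> \<beta>"
proof -
  have "exp (- (170 / 144) * ln (2 / \<beta>)) = exp (- ln (2 / \<beta>)) * exp (- (26 / 144) * ln (2 / \<beta>))"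
    by (simp add: exp_add[symmetric])
  also have "\<dots> \<le> \<beta> / 2 * exp (- 13 / 108)"
  proof (rule mult_mono)
    show "exp (- ln (2 / \<beta>)) \<le> \<beta> / 2" using \<open>0 < \<beta>\<close> by (simp add: exp_minus inverse_eq_divide)
    show "exp (- (26 / 144) * ln (2 / \<beta>)) \<le> exp (- 13 / 108)" using L by simp
  qed (use \<open>0 < \<beta>\<close> in auto)
  finally have "2 * ((1 + 11 / 128) * exp (- (170 / 144) * ln (2 / \<beta>)))
      \<le> \<beta> * ((1 + 11 / 128) * exp (- 13 / 108))"
    by simp
  also have "(1 + 11 / 128) * exp (- 13 / 108 :: real) \<le> 1"
    using exp_ge_add_one_self[of "13 / 108 :: real"] by (simp add: exp_minus field_simps)
  finally show ?thesis using \<open>0 < \<beta>\<close> by simp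
qed

lemma exists_moment_order:
  fixes \<beta> \<tau> :: real and n :: nat
  assumes \<beta>: "0 < \<beta>" "\<beta> < 1" and \<tau>: "0 < \<tau>" "\<tau> < 1"
    and n: "48 * ln (4 / \<beta>) / \<tau>\<^sup>2 \<le> real n"
  obtains t where "t \<le> n" and "0 < n" and "0 < 1 + \<tau> - 2 * real t / real n"
    and "2 * (exp (real t * (\<tau> / 4)) * (1 + real t * exp (- 4 * ln (8 / \<beta>) / \<tau>) * 2 ^ t)
           / (1 + \<tau> - 2 * real t / real n) ^ t) \<le> \<beta>"
proof -
  define L where "L = ln (2 / \<beta>)"
  define u where "u = 1 / \<tau>"
  define t where "t = nat \<lceil>5 * L * u\<rceil>"
  have "ln 2 \<le> L" unfolding L_def using \<beta> by (subst ln_le_cancel_iff) (auto simp: field_simps)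
  then have L: "2 / 3 \<le> L" using ln2_ge_two_thirds by linarith
  have u: "1 < u" "\<tau> * u = 1" using \<tau> by (auto simp: u_def)
  have ln4: "ln (4 / \<beta>) = L + ln 2" and ln8: "ln (8 / \<beta>) = L + 2 * ln 2"
    using \<beta> ln_mult_pos[of 2 "2 / \<beta>"] ln_mult_pos[of 2 "4 / \<beta>"] by (simp_all add: L_def)
  have n': "48 * L * u\<^sup>2 \<le> 48 * ln (4 / \<beta>) / \<tau>\<^sup>2"
    unfolding ln4 u_def using ln2_ge_two_thirds by (simp add: power_divide divide_right_mono)
  note bounds = moment_order_bounds[OF L u(1) order.trans[OF n' n], folded t_def]
  have s: "2 * real t / real n \<le> 13 / 48 * \<tau>" using bounds(5) by (simp add: u_def)
  have decay: "exp (real t * (\<tau> / 4)) / (1 + \<tau> - 2 * real t / real n) ^ t \<le> exp (- (170 / 144) * L)"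
  proof (rule exp_div_power_le[OF \<tau> _ s])
    have "5 * L * (\<tau> * u) \<le> real t * \<tau>"
      using mult_right_mono[OF bounds(1), of \<tau>] \<tau> by (simp add: algebra_simps)
    then show "5 * L \<le> real t * \<tau>" using u(2) by simp
  qed (use bounds(4) in simp)
  have privacy: "real t * exp (- 4 * ln (8 / \<beta>) / \<tau>) * 2 ^ t \<le> 11 / 128"
    using privacy_term_bound[OF L u(1) bounds(2)] by (simp add: ln8 u_def)
  have K: "0 < 1 + \<tau> - 2 * real t / real n" using s \<tau> by linarith
  define Q where "Q = exp (real t * (\<tau> / 4)) * (1 + real t * exp (- 4 * ln (8 / \<beta>) / \<tau>) * 2 ^ t)
    / (1 + \<tau> - 2 * real t / real n) ^ t"
  have "Q = (1 + real t * exp (- 4 * ln (8 / \<beta>) / \<tau>) * 2 ^ t)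
      * (exp (real t * (\<tau> / 4)) / (1 + \<tau> - 2 * real t / real n) ^ t)"
    by (simp add: Q_def)
  also have "\<dots> \<le> (1 + 11 / 128) * exp (- (170 / 144) * L)"
    using privacy decay K by (intro mult_mono) auto
  finally have "2 * Q \<le> 2 * ((1 + 11 / 128) * exp (- (170 / 144) * L))" by simp
  also have "\<dots> \<le> \<beta>"
    unfolding L_def by (rule constant_factor_le_beta[OF \<beta>(1) L[unfolded L_def]])
  finally have "2 * Q \<le> \<beta>" .
  with bounds(3,4) K show thesis unfolding Q_def by (rule that)
qed

theorem theorem3p3:
  fixes A :: "'a::countable list \<Rightarrow> ('a \<Rightarrow> real) measure"
    and P :: "'a pmf"
    and n :: nat and \<epsilon> \<delta> \<beta> \<tau> :: real
  assumes alg: "rand_alg n A"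
    and dp: "diff_private n \<epsilon> \<delta> A"
    and beta: "\<beta> > 0" and tau: "\<tau> > 0"
    and n_ge: "real n \<ge> 48 * ln (4 / \<beta>) / \<tau>\<^sup>2"
    and eps: "\<epsilon> \<le> \<tau> / 4"
    and delta: "\<delta> = exp (- 4 * ln (8 / \<beta>) / \<tau>)"
  shows "measure_pmf.expectation (replicate_pmf n P)
           (\<lambda>S. measure (A S) {\<phi> \<in> space output_space. \<bar>pop_mean P \<phi> - emp_mean S \<phi>\<bar> > \<tau>})
         \<le> \<beta>"
proof -
  consider "1 \<le> \<tau>" | "1 \<le> \<beta>" | "\<beta> < 1" "\<tau> < 1" by linarith
  then show ?thesis
  proof cases
    case 1
    then show ?thesis using beta by (simp add: deviation_event_empty)
  next
    case 2
    then show ?thesis using expectation_measure_le_1[OF alg] by (rule order.trans[rotated])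
  next
    case 3
    then obtain t where "t \<le> n" "0 < n" "0 < 1 + \<tau> - 2 * real t / real n"
      and "2 * (exp (real t * (\<tau> / 4)) * (1 + real t * \<delta> * 2 ^ t)
              / (1 + \<tau> - 2 * real t / real n) ^ t) \<le> \<beta>"
      using exists_moment_order[OF beta _ tau _ n_ge] unfolding delta by blast
    moreover have "diff_private n (\<tau> / 4) \<delta> A" using dp eps by (rule diff_private_mono)
    ultimately show ?thesis
      using deviation_tail_bound[OF alg, of "\<tau> / 4" \<delta> t \<tau> P] tau delta by fastforce
  qed
qed

end
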